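(* Let $M=T^*Q$ be the phase space of the complexified planar Kepler problem with symplectic form $\omega=dx_1\wedge dy_1+dx_2\wedge dy_2$ and functions $\xi_1,c_1,c_2,c_3,c_4$ as in the context. Let $V=\{p\in M: c_2(p)+ic_3(p)\neq 0\}$, on which $(\xi_1,c_1,c_3,c_4)$ serve as local coordinates. Then \[\omega|_V=\left(\Big(\frac{i}{c_1}-\frac{c_3}{c_1(c_2+ic_3)}\Big)dc_1-\frac{i}{\xi_1}d\xi_1\right)\wedge dc_3+\frac{c_1}{c_2+ic_3}\,dc_1\wedge dc_4.\]
   Context: Let $U=\{(x_1,x_2)\in\mathbb{C}^2: x_1^2+x_2^2\neq 0\}$ and write $\xi_1=x_1+ix_2$, $\xi_2=x_1-ix_2$, so $\xi_1\xi_2=x_1^2+x_2^2\neq0$ on $U$. Take two copies $Q_I,Q_{II}$ of $U$. For each fixed $\xi_2\neq 0$, cut both $\xi_1$-slices $\mathbb{C}\setminus\{0\}$ along the half-line $\{\xi_1=t\xi_2^{-1}: t<0\}$ and glue them crosswise (upper edge of sheet $I$ to lower edge of sheet $II$ and vice versa), as for the Riemann surface of a square root; letting $\xi_2$ vary gives a complex $2$-manifold $Q$, whose points are written $(\xi_1,\xi_2)_k$, $k\in\{I,II\}$. Define $c_1=\sqrt{\xi_1\xi_2}$ (principal branch, argument in $(-\pi/2,\pi/2]$) on $Q_I$ and $c_1=-\sqrt{\xi_1\xi_2}$ on $Q_{II}$, a holomorphic square root of $x_1^2+x_2^2$ on $Q$. The phase space is $M=T^*Q\cong Q\times\mathbb{C}^2$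 with fiber coordinates $(y_1,y_2)$; set $\eta_1=y_1+iy_2$, $\eta_2=y_1-iy_2$, and $c_2=\xi_1\eta_2$, $c_3=\frac{i}{2}(\xi_1\eta_2-\xi_2\eta_1)=x_1y_2-x_2y_1$ (angular momentum), $c_4=\frac12\eta_1\eta_2-\frac1{c_1}=\frac12(y_1^2+y_2^2)-\frac1{c_1}$ (Kepler Hamiltonian). These satisfy $2c_4c_1^2+2c_1=c_2^2+2ic_3c_2$. *)

theory Defs
  imports "HOL-Analysis.Analysis"
begin

text \<open>Points of M = T*Q are written (x1,x2,y1,y2) together with a sheet label k.
  Base point (x1,x2) in U, i.e. x1^2+x2^2 \<noteq> 0.\<close>

datatype sheet = SheetI | SheetII

type_synonym mpt = "complex \<times> complex \<times> complex \<times> complex"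

definition xi1 :: "mpt \<Rightarrow> complex" where
  "xi1 w = (case w of (x1,x2,y1,y2) \<Rightarrow> x1 + \<i> * x2)"
definition xi2 :: "mpt \<Rightarrow> complex" where
  "xi2 w = (case w of (x1,x2,y1,y2) \<Rightarrow> x1 - \<i> * x2)"
definition eta1 :: "mpt \<Rightarrow> complex" where
  "eta1 w = (case w of (x1,x2,y1,y2) \<Rightarrow> y1 + \<i> * y2)"
definition eta2 :: "mpt \<Rightarrow> complex" where
  "eta2 w = (case w of (x1,x2,y1,y2) \<Rightarrow> y1 - \<i> * y2)"

text \<open>c1 on Q: principal square root (csqrt has argument in (-pi/2, pi/2]) on sheet I,
  its negative on sheet II.\<close>
definition c1 :: "complex \<Rightarrow> complex \<Rightarrow> sheet \<Rightarrow> complex" where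
  "c1 x1 x2 k = (if k = SheetI then csqrt ((x1 + \<i>*x2) * (x1 - \<i>*x2))
                 else - csqrt ((x1 + \<i>*x2) * (x1 - \<i>*x2)))"

definition c2 :: "mpt \<Rightarrow> complex" where
  "c2 w = xi1 w * eta2 w"

definition c3 :: "mpt \<Rightarrow> complex" where
  "c3 w = (\<i>/2) * (xi1 w * eta2 w - xi2 w * eta1 w)"

text \<open>c4 = (1/2) eta1 eta2 - 1/c1, with c1 given in the local chart by a function C1 of (x1,x2).\<close>
definition c4_loc :: "(complex \<times> complex \<Rightarrow> complex) \<Rightarrow> mpt \<Rightarrow> complex" where
  "c4_loc C1 w = (case w of (x1,x2,y1,y2) \<Rightarrow> eta1 w * eta2 w / 2 - 1 / C1 (x1,x2))"

definition omega :: "mpt \<Rightarrow> mpt \<Rightarrow> complex" where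
  "omega u v = (case u of (a1,a2,b1,b2) \<Rightarrow> case v of (a1',a2',b1',b2') \<Rightarrow>
      a1*b1' - a1'*b1 + a2*b2' - a2'*b2)"

definition wedge :: "(mpt \<Rightarrow> complex) \<Rightarrow> (mpt \<Rightarrow> complex) \<Rightarrow> mpt \<Rightarrow> mpt \<Rightarrow> complex" where
  "wedge \<alpha> \<beta> u v = \<alpha> u * \<beta> v - \<alpha> v * \<beta> u"

end

theory Submission
  imports Defs
begin

(* Write x = (x1,x2) and y = (y1,y2). Then c3 = x \<times> y and c2 + i c3 = x \<cdot> y, and
   differentiating c1^2 = x \<cdot> x gives dc1 = (x \<cdot> dx)/c1. Since c1^2 = \<xi>1 \<xi>2, the imaginary
   terms of the dc3-coefficient combine to the angular form (x1 dx2 - x2 dx1)/c1^2, and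
   Lagrange's identity (x \<cdot> y)(x \<times> dx) - (x \<times> y)(x \<cdot> dx) = (x \<cdot> x)(y \<times> dx) turns the whole
   coefficient into (y \<times> dx)/(x \<cdot> y). In the dc4 term the dc1 component of dc4 drops out, so
   the claim reduces to the polynomial identity
   (x \<cdot> y) \<omega> = (y \<times> dx) \<and> dc3 + (x \<cdot> dx) \<and> (y \<cdot> dy). *)

definition dot :: "'a::comm_ring \<times> 'a \<Rightarrow> 'a \<times> 'a \<Rightarrow> 'a" where
  "dot a b = fst a * fst b + snd a * snd b"

definition cross :: "'a::comm_ring \<times> 'a \<Rightarrow> 'a \<times> 'a \<Rightarrow> 'a" where
  "cross a b = fst a * snd b - snd a * fst b"

definition position :: "mpt \<Rightarrow> complex \<times> complex" where
  "position w = (fst w, fst (snd w))"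

definition momentum :: "mpt \<Rightarrow> complex \<times> complex" where
  "momentum w = snd (snd w)"

lemma dot_commute: "dot a b = dot b a"
  by (simp add: dot_def mult.commute)

lemma dot_cross_lagrange: "dot x y * cross x a - cross x y * dot x a = dot x x * cross y a"
  by (simp add: dot_def cross_def algebra_simps)

lemma omega_eq_dot: "omega u v = dot (position u) (momentum v) - dot (position v) (momentum u)"
  by (cases u; cases v) (simp add: omega_def dot_def position_def momentum_def)

lemma xi1_eq: "xi1 w = fst (position w) + \<i> * snd (position w)"
  by (cases w) (simp add: xi1_def position_def)

lemma xi1_times_xi2: "xi1 w * xi2 w = dot (position w) (position w)"
  by (cases w) (simp add: xi1_def xi2_def position_def dot_def algebra_simps)

lemma cross_position_eq_xi:
  "cross (position w) (position h) = \<i> * (dot (position w) (position h) - xi2 w * xi1 h)"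
  by (cases w; cases h) (simp add: xi1_def xi2_def position_def dot_def cross_def algebra_simps)

lemma c3_eq_cross: "c3 w = cross (position w) (momentum w)"
  by (cases w) (simp add: c3_def xi1_def xi2_def eta1_def eta2_def position_def momentum_def
      cross_def algebra_simps)

lemma c2_plus_i_c3: "c2 w + \<i> * c3 w = dot (position w) (momentum w)"
  by (cases w) (simp add: c2_def c3_def xi1_def xi2_def eta1_def eta2_def position_def momentum_def
      dot_def algebra_simps)

lemma c4_loc_eq: "c4_loc C1 w = dot (momentum w) (momentum w) / 2 - 1 / C1 (position w)"
  by (cases w) (simp add: c4_loc_def eta1_def eta2_def position_def momentum_def dot_def algebra_simps)

lemma has_derivative_position [derivative_intros]:
  "(position has_derivative position) (at x within S)"
  unfolding position_def by (auto intro!: derivative_eq_intros)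

lemma has_derivative_momentum [derivative_intros]:
  "(momentum has_derivative momentum) (at x within S)"
  unfolding momentum_def by (auto intro!: derivative_eq_intros)

lemma has_derivative_dot [derivative_intros]:
  fixes f g :: "'a::real_normed_vector \<Rightarrow> 'b::{real_normed_algebra,comm_ring} \<times> 'b"
  assumes "(f has_derivative f') (at x within S)" "(g has_derivative g') (at x within S)"
  shows "((\<lambda>x. dot (f x) (g x)) has_derivative
    (\<lambda>h. dot (f x) (g' h) + dot (f' h) (g x))) (at x within S)"
  unfolding dot_def using assms
  by (auto intro!: derivative_eq_intros simp: algebra_simps)

lemma has_derivative_cross [derivative_intros]:
  fixes f g :: "'a::real_normed_vector \<Rightarrow> 'b::{real_normed_algebra,comm_ring} \<times> 'b"
  assumes "(f has_derivative f') (at x within S)" "(g has_derivative g') (at x within S)"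
  shows "((\<lambda>x. cross (f x) (g x)) has_derivative
    (\<lambda>h. cross (f x) (g' h) + cross (f' h) (g x))) (at x within S)"
  unfolding cross_def using assms
  by (auto intro!: derivative_eq_intros simp: algebra_simps)

lemma has_derivative_xi1: "(xi1 has_derivative xi1) (at p)"
  unfolding xi1_eq[abs_def] by (auto intro!: derivative_eq_intros)

lemma has_derivative_c3:
  "(c3 has_derivative (\<lambda>h. cross (position p) (momentum h) + cross (position h) (momentum p))) (at p)"
  unfolding c3_eq_cross[abs_def] by (auto intro!: derivative_eq_intros)

lemma has_derivative_square_root:
  fixes g f :: "'a::real_normed_vector \<Rightarrow> 'b::real_normed_field"
  assumes g: "(g has_derivative g') (at p)" and f: "(f has_derivative f') (at p)"
    and S: "open S" "p \<in> S" "\<And>x. x \<in> S \<Longrightarrow> g x ^ 2 = f x" and "g p \<noteq> 0"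
  shows "g' h = f' h / (2 * g p)"
proof -
  have "((\<lambda>x. g x ^ 2) has_derivative (\<lambda>h. 2 * g p * g' h)) (at p)"
    using g by (auto intro!: derivative_eq_intros)
  then have "(f has_derivative (\<lambda>h. 2 * g p * g' h)) (at p)"
    using S by (rule has_derivative_transform_within_open) simp
  then have "f' = (\<lambda>h. 2 * g p * g' h)"
    using f has_derivative_unique by blast
  then show ?thesis
    using \<open>g p \<noteq> 0\<close> by simp
qed

lemma has_derivative_local_root_position:
  assumes "open W" "position p \<in> W" "\<forall>z\<in>W. C1 z ^ 2 = fst z ^ 2 + snd z ^ 2"
    and D: "((\<lambda>w. C1 (position w)) has_derivative D) (at p)" and "C1 (position p) \<noteq> 0"
  shows "D = (\<lambda>h. dot (position p) (position h) / C1 (position p))"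
proof
  fix h
  have S: "open (position -` W)"
    using \<open>open W\<close> unfolding position_def by (intro open_vimage continuous_intros)
  have root: "C1 (position w) ^ 2 = dot (position w) (position w)" if "w \<in> position -` W" for w
    using that assms(3) by (simp add: dot_def power2_eq_square)
  have "((\<lambda>w. dot (position w) (position w)) has_derivative
      (\<lambda>h. 2 * dot (position p) (position h))) (at p)"
    by (auto intro!: derivative_eq_intros simp: dot_commute)
  from has_derivative_square_root[OF D this S _ root]
  show "D h = dot (position p) (position h) / C1 (position p)"
    using assms(2,5) by simp
qed

lemma has_derivative_c4_loc:
  assumes "((\<lambda>w. C1 (position w)) has_derivative D) (at p)" "C1 (position p) \<noteq> 0"
  shows "(c4_loc C1 has_derivative
    (\<lambda>h. dot (momentum p) (momentum h) + D h / C1 (position p) ^ 2)) (at p)"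
  unfolding c4_loc_eq[abs_def] using assms
  by (auto intro!: derivative_eq_intros simp: dot_commute power2_eq_square field_simps)

lemma wedge_scale_left: "wedge (\<lambda>h. a * f h) g u v = a * wedge f g u v"
  by (simp add: wedge_def algebra_simps)

lemma wedge_add_scaled_right: "wedge f (\<lambda>h. g h + a * f h) u v = wedge f g u v"
  by (simp add: wedge_def algebra_simps)

lemma dot_momentum_times_omega:
  "dot (position p) (momentum p) * omega u v =
     wedge (\<lambda>h. cross (momentum p) (position h))
       (\<lambda>h. cross (position p) (momentum h) + cross (position h) (momentum p)) u v
   + wedge (\<lambda>h. dot (position p) (position h)) (\<lambda>h. dot (momentum p) (momentum h)) u v"
  by (simp add: omega_eq_dot wedge_def dot_def cross_def algebra_simps)

lemma omega_kepler_chart: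
  fixes p u v :: mpt and c :: complex
  assumes c: "c ^ 2 = dot (position p) (position p)" "c \<noteq> 0"
    and q: "dot (position p) (momentum p) \<noteq> 0"
  shows "omega u v =
    wedge (\<lambda>h. (\<i> / c - c3 p / (c * dot (position p) (momentum p))) * (dot (position p) (position h) / c)
               - (\<i> / xi1 p) * xi1 h)
      (\<lambda>h. cross (position p) (momentum h) + cross (position h) (momentum p)) u v
  + wedge (\<lambda>h. c / dot (position p) (momentum p) * (dot (position p) (position h) / c))
      (\<lambda>h. dot (momentum p) (momentum h) + dot (position p) (position h) / c / c ^ 2) u v"
    (is "_ = wedge ?\<alpha> ?dL u v + wedge ?\<beta> ?dE u v")
proof -
  let ?x = "position p" and ?y = "momentum p"
  let ?q = "dot ?x ?y" and ?R = "dot ?x ?x"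
  have xi_prod: "xi1 p * xi2 p = c ^ 2"
    using c(1) by (simp add: xi1_times_xi2)
  then have xi1: "xi1 p \<noteq> 0"
    using c(2) by auto
  with xi_prod have xi2: "xi2 p = c ^ 2 / xi1 p"
    by (simp add: field_simps)
  have R: "?R \<noteq> 0" "c * c = ?R"
    using c by (auto simp: power2_eq_square)
  have \<alpha>: "?\<alpha> h = cross ?y (position h) / ?q" for h
  proof -
    have angular: "\<i> / c * (dot ?x (position h) / c) - (\<i> / xi1 p) * xi1 h = cross ?x (position h) / ?R"
      unfolding cross_position_eq_xi[of p h] xi2 c(1)[symmetric]
      using c(2) xi1 by (simp add: field_simps power2_eq_square)
    have "?\<alpha> h = (\<i> / c * (dot ?x (position h) / c) - (\<i> / xi1 p) * xi1 h)
        - cross ?x ?y * dot ?x (position h) / (c * c * ?q)"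
      using c(2) q by (simp add: c3_eq_cross field_simps)
    also have "\<dots> = cross ?x (position h) / ?R - cross ?x ?y * dot ?x (position h) / (?R * ?q)"
      unfolding angular R(2) ..
    also have "\<dots> = (?q * cross ?x (position h) - cross ?x ?y * dot ?x (position h)) / (?R * ?q)"
      using R q by (simp add: field_simps)
    also have "\<dots> = cross ?y (position h) / ?q"
      using R q by (simp add: dot_cross_lagrange)
    finally show ?thesis .
  qed
  have "?\<alpha> = (\<lambda>h. 1 / ?q * cross ?y (position h))"
    using \<alpha> by simp
  moreover have "?\<beta> = (\<lambda>h. 1 / ?q * dot ?x (position h))"
    using c(2) by simp
  moreover have "?dE = (\<lambda>h. dot ?y (momentum h) + 1 / c ^ 3 * dot ?x (position h))"
    by (simp add: power3_eq_cube power2_eq_square mult.assoc)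
  ultimately have "wedge ?\<alpha> ?dL u v + wedge ?\<beta> ?dE u v = 1 / ?q * (?q * omega u v)"
    by (simp only: wedge_scale_left wedge_add_scaled_right dot_momentum_times_omega distrib_left)
  then show ?thesis
    using q by simp
qed

theorem proposition2:
  fixes x1 x2 y1 y2 :: complex and k :: sheet
    and W :: "(complex \<times> complex) set" and C1 :: "complex \<times> complex \<Rightarrow> complex"
    and DXi1 DC1 DC3 DC4 :: "mpt \<Rightarrow> complex" and u v :: mpt
  assumes inU: "x1^2 + x2^2 \<noteq> 0"
    and inV: "c2 (x1,x2,y1,y2) + \<i> * c3 (x1,x2,y1,y2) \<noteq> 0"
    and chart: "open W" "(x1,x2) \<in> W" "continuous_on W C1"
      "\<forall>z\<in>W. (C1 z)^2 = (fst z)^2 + (snd z)^2" "C1 (x1,x2) = c1 x1 x2 k"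
    and dxi1: "(xi1 has_derivative DXi1) (at (x1,x2,y1,y2))"
    and dc1: "((\<lambda>(a,b,c,d). C1 (a,b)) has_derivative DC1) (at (x1,x2,y1,y2))"
    and dc3: "(c3 has_derivative DC3) (at (x1,x2,y1,y2))"
    and dc4: "(c4_loc C1 has_derivative DC4) (at (x1,x2,y1,y2))"
  shows "omega u v =
    wedge (\<lambda>h. (\<i> / c1 x1 x2 k - c3 (x1,x2,y1,y2)
                    / (c1 x1 x2 k * (c2 (x1,x2,y1,y2) + \<i> * c3 (x1,x2,y1,y2)))) * DC1 h
               - (\<i> / xi1 (x1,x2,y1,y2)) * DXi1 h) DC3 u v
  + wedge (\<lambda>h. c1 x1 x2 k / (c2 (x1,x2,y1,y2) + \<i> * c3 (x1,x2,y1,y2)) * DC1 h) DC4 u v"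
proof -
  define p where "p = (x1, x2, y1, y2)"
  define c where "c = c1 x1 x2 k"
  have pos: "position p = (x1, x2)"
    by (simp add: p_def position_def)
  have dc1': "((\<lambda>w. C1 (position w)) has_derivative DC1) (at p)"
    using dc1 by (simp add: p_def position_def case_prod_beta')
  have Cp: "C1 (position p) = c" and c_sq: "c ^ 2 = dot (position p) (position p)"
    using chart(2,4,5) by (auto simp: pos c_def dot_def power2_eq_square)
  with inU have "c \<noteq> 0"
    by (auto simp: pos dot_def power2_eq_square)
  have "DXi1 = xi1" "DC3 = (\<lambda>h. cross (position p) (momentum h) + cross (position h) (momentum p))"
    using has_derivative_unique dxi1 dc3 has_derivative_xi1 has_derivative_c3 unfolding p_def by blast+
  moreover have "DC1 = (\<lambda>h. dot (position p) (position h) / c)"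
    using has_derivative_local_root_position[OF chart(1) _ chart(4) dc1'] chart(2) Cp \<open>c \<noteq> 0\<close>
    by (simp add: pos)
  moreover have "DC4 = (\<lambda>h. dot (momentum p) (momentum h) + DC1 h / c ^ 2)"
    using has_derivative_c4_loc[OF dc1'] dc4 has_derivative_unique Cp \<open>c \<noteq> 0\<close> unfolding p_def by blast
  ultimately show ?thesis
    using omega_kepler_chart[OF c_sq \<open>c \<noteq> 0\<close>, of u v] inV
    unfolding p_def[symmetric] c_def[symmetric] c2_plus_i_c3 by simp
qed

end
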